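(* Let $n\in\mathbb{N}$ and $a\in\mathbb{R}$ with $|a|>5$. Let $\tilde{E}_n(a,1)$ be the $(n+1)\times n$ matrix whose $(i,j)$ entry is $a$ if $i=j$, $1$ if $j=i+1$, $a$ if $i=j+1$, $1$ if $i=j+2$, and $0$ otherwise, and let $\tilde{B}_n(a,1)$ be the $(n+3)\times n$ matrix whose first row is $(1,0,\dots,0)$, whose rows $2,\dots,n+2$ are the rows of $\tilde{E}_n(a,1)$ in order, and whose last row is $(0,\dots,0,1)$. Then the columns of $\tilde{B}_n(a,1)$ are linearly independent, and every non-zero linear combination of these columns has at least $4$ non-zero entries. *)

theory Defs
  imports Complex_Main
begin

text \<open>Matrices with dimensions depending on n are represented as functions
  nat \<Rightarrow> nat \<Rightarrow> real with 1-based indices (row i, column j),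
  as in the paper; entries outside the stated index ranges are irrelevant.\<close>

definition Etilde :: "nat \<Rightarrow> real \<Rightarrow> real \<Rightarrow> nat \<Rightarrow> nat \<Rightarrow> real" where
  "Etilde n a b i j =
     (if i = j then a
      else if j = i + 1 then b
      else if i = j + 1 then a
      else if i = j + 2 then b
      else 0)"

definition Btilde :: "nat \<Rightarrow> real \<Rightarrow> real \<Rightarrow> nat \<Rightarrow> nat \<Rightarrow> real" where
  "Btilde n a b i j =
     (if i = 1 then (if j = 1 then 1 else 0)
      else if i = n + 3 then (if j = n then 1 else 0)
      else Etilde n a b (i - 1) j)"

definition col_comb :: "nat \<Rightarrow> (nat \<Rightarrow> nat \<Rightarrow> real) \<Rightarrow> (nat \<Rightarrow> real) \<Rightarrow> nat \<Rightarrow> real" where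
  "col_comb n M c i = (\<Sum>j=1..n. c j * M i j)"

definition cols_lin_indep :: "nat \<Rightarrow> nat \<Rightarrow> (nat \<Rightarrow> nat \<Rightarrow> real) \<Rightarrow> bool" where
  "cols_lin_indep m n M \<longleftrightarrow>
     (\<forall>c. (\<forall>i\<in>{1..m}. col_comb n M c i = 0) \<longrightarrow> (\<forall>j\<in>{1..n}. c j = 0))"

end

theory Submission
  imports Defs
begin

text \<open>Column j of B~_n(a,1) carries the entries 1, a, a, 1 in rows j, ..., j+3. Hence the
  matrix is lower triangular with unit diagonal, which gives independence of the columns,
  and the vector v = B~_n(a,1) c has the generating polynomial
  sum_i v_i t^i = q(t) sum_j c_j t^j  with  q(t) = 1 + a t + a t^2 + t^3 = (1 + t)(t^2 + (a - 1) t + 1).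
  For |a| > 5 the polynomial q has the three roots -1, r, 1/r with |r| > 3. If v had at most
  three non-zero entries, at positions x < y < z, they would solve a homogeneous 3 x 3 system
  whose rows are (t^x, t^y, t^z) for t = r, 1/r, -1; its determinant is
  dominated by the single term of size |r|^(z-x), so it is non-zero and v = 0.\<close>

lemma card_3_sorted:
  fixes T :: "'a::linorder set"
  assumes "card T = 3"
  obtains x y z where "x < y" "y < z" "T = {x, y, z}"
proof -
  have fin: "finite T" using assms card.infinite by fastforce
  have "length (sorted_list_of_set T) = 3" using assms by simp
  then obtain x y z where xs: "sorted_list_of_set T = [x, y, z]"
    by (auto simp del: length_sorted_list_of_set simp: numeral_3_eq_3 length_Suc_conv)
  have "sorted_wrt (<) [x, y, z]" unfolding xs[symmetric] by (rule strict_sorted_list_of_set)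
  moreover have "T = {x, y, z}" using fin by (metis xs set_sorted_list_of_set list.set(1,2))
  ultimately show ?thesis by (intro that[of x y z]) auto
qed

lemma subset_sorted_triple:
  fixes S :: "nat set"
  assumes "finite S" "card S \<le> 3"
  obtains x y z where "x < y" "y < z" "S \<subseteq> {x, y, z}"
proof -
  have "infinite (UNIV - S)" using assms(1) by (simp add: Diff_infinite_finite)
  then obtain F where "finite F" "card F = 3 - card S" "F \<subseteq> UNIV - S"
    using infinite_arbitrarily_large by metis
  then have "card (S \<union> F) = 3" using assms by (subst card_Un_disjoint) auto
  then show ?thesis using card_3_sorted that by (metis Un_upper1)
qed

lemma homogeneous_3x3_trivial_solution:
  fixes al be ga X1 X2 X3 Y1 Y2 Y3 :: "'a::field"
  assumes "al + be * X1 + ga * Y1 = 0" "al + be * X2 + ga * Y2 = 0" "al + be * X3 + ga * Y3 = 0"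
    and det: "(X1 - X2) * (Y1 - Y3) - (Y1 - Y2) * (X1 - X3) \<noteq> 0"
  shows "al = 0 \<and> be = 0 \<and> ga = 0"
proof -
  define D where "D = (X1 - X2) * (Y1 - Y3) - (Y1 - Y2) * (X1 - X3)"
  have row12: "be * (X1 - X2) + ga * (Y1 - Y2) = 0" and row13: "be * (X1 - X3) + ga * (Y1 - Y3) = 0"
    using assms(1-3) by algebra+
  have "be * D = (be * (X1 - X2) + ga * (Y1 - Y2)) * (Y1 - Y3)
      - (be * (X1 - X3) + ga * (Y1 - Y3)) * (Y1 - Y2)"
    unfolding D_def by algebra
  then have be: "be = 0" using row12 row13 det D_def by simp
  have "ga * D = (be * (X1 - X3) + ga * (Y1 - Y3)) * (X1 - X2)
      - (be * (X1 - X2) + ga * (Y1 - Y2)) * (X1 - X3)"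
    unfolding D_def by algebra
  then have ga: "ga = 0" using row12 row13 det D_def by simp
  show ?thesis using assms(1) be ga by simp
qed

lemma generalized_vandermonde_det_nonzero:
  fixes r :: real and p q :: nat
  assumes r: "3 < \<bar>r\<bar>" and q: "0 < q" "q < p"
  shows "(r^q - inverse r ^ q) * (r^p - (-1)^p) - (r^p - inverse r ^ p) * (r^q - (-1)^q) \<noteq> 0"
proof -
  define u where "u = inverse r"
  define R where "R = \<bar>r\<bar>"
  define s1 s2 :: real where "s1 = (-1)^q" and "s2 = (-1)^p"
  have ru: "r * u = 1" using r by (simp add: u_def)
  have "u^q * r^p = (u * r)^q * r^(p - q)" and "u^p * r^q = (u * r)^q * u^(p - q)"
    using q by (simp_all add: power_mult_distrib flip: power_add)
  then have expand: "(r^q - u^q) * (r^p - s2) - (r^p - u^p) * (r^q - s1)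
      = s1 * r^p - (s2 * r^q + r^(p - q)) + (u^(p - q) + s2 * u^q - s1 * u^p)"
    using ru by (simp add: algebra_simps)
  have u_le: "\<bar>u^k\<bar> \<le> 1" for k
    using r by (simp add: u_def power_abs power_le_one abs_inverse inverse_le_1_iff)
  have pow_le: "R^k \<le> R^(p - 1)" if "k \<le> p - 1" for k
    using that r by (intro power_increasing) (auto simp: R_def)
  have "R \<le> R^(p - 1)" using pow_le[of 1] q by simp
  moreover have "3 * R^(p - 1) < R * R^(p - 1)"
    using r \<open>R \<le> R^(p - 1)\<close> by (intro mult_strict_right_mono) (auto simp: R_def)
  ultimately have dominant: "2 * R^(p - 1) + 3 < R * R^(p - 1)" using r R_def by linarith
  have "\<bar>s1 * r^p\<bar> = R * R^(p - 1)"
    using q by (simp add: s1_def R_def abs_mult power_abs flip: power_Suc)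
  moreover have "\<bar>s2 * r^q + r^(p - q)\<bar> \<le> R^q + R^(p - q)"
    using abs_triangle_ineq[of "s2 * r^q" "r^(p - q)"] by (simp add: s2_def R_def abs_mult power_abs)
  moreover have "R^q + R^(p - q) \<le> 2 * R^(p - 1)"
  proof -
    have "q \<le> p - 1" "p - q \<le> p - 1" using q by auto
    with pow_le show ?thesis by (metis add_mono mult_2)
  qed
  moreover have "\<bar>u^(p - q) + s2 * u^q - s1 * u^p\<bar> \<le> 3"
  proof -
    have "\<bar>u^(p - q)\<bar> \<le> 1" "\<bar>s2 * u^q\<bar> \<le> 1" "\<bar>s1 * u^p\<bar> \<le> 1"
      using u_le by (simp_all add: s1_def s2_def abs_mult)
    then show ?thesis unfolding abs_le_iff by linarith
  qed
  ultimately have "(r^q - u^q) * (r^p - s2) - (r^p - u^p) * (r^q - s1) \<noteq> 0"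
    unfolding expand using dominant by linarith
  then show ?thesis by (simp add: u_def s1_def s2_def)
qed

lemma three_term_power_sum_coeffs_zero:
  fixes r al be ga :: real and x y z :: nat
  assumes r: "3 < \<bar>r\<bar>" and xyz: "x < y" "y < z"
    and vanish: "\<forall>t\<in>{r, inverse r, -1}. al * t^x + be * t^y + ga * t^z = 0"
  shows "al = 0 \<and> be = 0 \<and> ga = 0"
proof -
  have shifted: "al + be * t^(y - x) + ga * t^(z - x) = 0" if t: "t \<in> {r, inverse r, -1}" for t
  proof -
    have "t \<noteq> 0" using t r by auto
    have "t^x * (al + be * t^(y - x) + ga * t^(z - x)) = al * t^x + be * t^y + ga * t^z"
      using xyz by (simp add: algebra_simps flip: power_add)
    also have "\<dots> = 0" using vanish t by blast
    finally show ?thesis using \<open>t \<noteq> 0\<close> by simp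
  qed
  have det: "(r^(y - x) - inverse r ^ (y - x)) * (r^(z - x) - (-1)^(z - x))
      - (r^(z - x) - inverse r ^ (z - x)) * (r^(y - x) - (-1)^(y - x)) \<noteq> 0"
    using generalized_vandermonde_det_nonzero[OF r, of "y - x" "z - x"] xyz by simp
  show ?thesis
    using homogeneous_3x3_trivial_solution[OF shifted[of r] shifted[of "inverse r"] shifted[of "-1"] det]
    by simp
qed

lemma sparse_power_sum_coeffs_zero:
  fixes r :: real and w :: "nat \<Rightarrow> real"
  assumes r: "3 < \<bar>r\<bar>" and S: "finite S" "card S \<le> 3"
    and vanish: "\<forall>t\<in>{r, inverse r, -1}. (\<Sum>i\<in>S. w i * t^i) = 0"
  shows "\<forall>i\<in>S. w i = 0"
proof -
  obtain x y z where xyz: "x < y" "y < z" and sub: "S \<subseteq> {x, y, z}"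
    using subset_sorted_triple[OF S] .
  define w' where "w' i = (if i \<in> S then w i else 0)" for i
  have sum_triple: "(\<Sum>i\<in>S. w i * t^i) = w' x * t^x + w' y * t^y + w' z * t^z" for t :: real
  proof -
    have "(\<Sum>i\<in>S. w i * t^i) = (\<Sum>i\<in>{x, y, z}. w' i * t^i)"
      using sub by (intro sum.mono_neutral_cong_left) (simp_all add: w'_def)
    also have "\<dots> = w' x * t^x + w' y * t^y + w' z * t^z"
      using xyz by (simp add: add.assoc)
    finally show ?thesis .
  qed
  have "\<forall>t\<in>{r, inverse r, -1}. w' x * t^x + w' y * t^y + w' z * t^z = 0"
    using vanish unfolding sum_triple .
  then have "w' x = 0 \<and> w' y = 0 \<and> w' z = 0"
    by (rule three_term_power_sum_coeffs_zero[OF r xyz])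
  then show ?thesis using sub by (auto simp: w'_def)
qed

lemma cols_lin_indep_lower_triangular:
  assumes "n \<le> m"
    and upper: "\<And>i j. 1 \<le> i \<Longrightarrow> i < j \<Longrightarrow> j \<le> n \<Longrightarrow> M i j = 0"
    and diag: "\<And>j. j \<in> {1..n} \<Longrightarrow> M j j \<noteq> 0"
  shows "cols_lin_indep m n M"
  unfolding cols_lin_indep_def
proof (intro allI impI ballI)
  fix c :: "nat \<Rightarrow> real" and j
  assume zero: "\<forall>i\<in>{1..m}. col_comb n M c i = 0"
  show "j \<in> {1..n} \<Longrightarrow> c j = 0"
  proof (induction j rule: less_induct)
    case (less j)
    have "c k * M j k = 0" if "k \<in> {1..n} - {j}" for k
      using that less upper[of j k] by (cases "k < j") auto
    then have "col_comb n M c j = c j * M j j"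
      using less.prems unfolding col_comb_def by (simp add: sum.remove sum.neutral)
    then show ?case using zero less.prems diag \<open>n \<le> m\<close> by auto
  qed
qed

lemma col_comb_nonzero_if_cols_lin_indep:
  assumes "cols_lin_indep m n M" "\<exists>j\<in>{1..n}. c j \<noteq> 0"
  shows "\<exists>i\<in>{1..m}. col_comb n M c i \<noteq> 0"
  using assms unfolding cols_lin_indep_def by meson

lemma Btilde_column_entry:
  assumes "j \<in> {1..n}" "i \<in> {1..n+3}"
  shows "Btilde n a 1 i j
    = (if i = j \<or> i = j + 3 then 1 else if i = j + 1 \<or> i = j + 2 then a else 0)"
proof -
  consider "i = 1" | "i = n + 3" | "1 < i" "i < n + 3" using assms by fastforce
  then show ?thesis
  proof cases
    case 1
    then show ?thesis using assms by (simp add: Btilde_def)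
  next
    case 2
    then show ?thesis using assms by (auto simp: Btilde_def)
  next
    case 3
    then show ?thesis by (auto simp: Btilde_def Etilde_def)
  qed
qed

lemma cols_lin_indep_Btilde: "cols_lin_indep (n + 3) n (Btilde n a 1)"
proof (rule cols_lin_indep_lower_triangular)
  show "\<And>i j. 1 \<le> i \<Longrightarrow> i < j \<Longrightarrow> j \<le> n \<Longrightarrow> Btilde n a 1 i j = 0"
    by (simp add: Btilde_column_entry)
  show "\<And>j. j \<in> {1..n} \<Longrightarrow> Btilde n a 1 j j \<noteq> 0"
    by (simp add: Btilde_column_entry)
qed simp

lemma Btilde_column_generating_function:
  assumes "j \<in> {1..n}"
  shows "(\<Sum>i=1..n+3. Btilde n a 1 i j * t^i) = t^j * (1 + a*t + a*t^2 + t^3)"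
proof -
  have "(\<Sum>i=1..n+3. Btilde n a 1 i j * t^i)
      = (\<Sum>i=1..n+3. (if i = j then t^i else 0) + (if i = j + 1 then a * t^i else 0)
          + (if i = j + 2 then a * t^i else 0) + (if i = j + 3 then t^i else 0))"
    using assms by (intro sum.cong refl) (auto simp: Btilde_column_entry)
  also have "\<dots> = t^j + a * t^(j + 1) + a * t^(j + 2) + t^(j + 3)"
    using assms by (simp add: sum.distrib)
  also have "\<dots> = t^j * (1 + a*t + a*t^2 + t^3)"
    by (simp add: power_add power2_eq_square power3_eq_cube algebra_simps)
  finally show ?thesis .
qed

lemma col_comb_Btilde_generating_function:
  "(\<Sum>i=1..n+3. col_comb n (Btilde n a 1) c i * t^i)
    = (1 + a*t + a*t^2 + t^3) * (\<Sum>j=1..n. c j * t^j)"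
proof -
  have "(\<Sum>i=1..n+3. col_comb n (Btilde n a 1) c i * t^i)
      = (\<Sum>j=1..n. c j * (\<Sum>i=1..n+3. Btilde n a 1 i j * t^i))"
    unfolding col_comb_def sum_distrib_left sum_distrib_right
    by (subst sum.swap) (simp add: mult_ac)
  also have "\<dots> = (\<Sum>j=1..n. c j * (t^j * (1 + a*t + a*t^2 + t^3)))"
    by (intro sum.cong refl) (simp only: Btilde_column_generating_function)
  also have "\<dots> = (1 + a*t + a*t^2 + t^3) * (\<Sum>j=1..n. c j * t^j)"
    by (subst sum_distrib_left) (simp add: mult_ac)
  finally show ?thesis .
qed

lemma palindromic_cubic_roots:
  fixes a r t :: real
  assumes r: "r^2 + (a - 1) * r + 1 = 0" and t: "t \<in> {r, inverse r, -1}"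
  shows "1 + a*t + a*t^2 + t^3 = 0"
proof -
  have "r \<noteq> 0" using r by auto
  then have "inverse r ^ 2 + (a - 1) * inverse r + 1 = inverse r ^ 2 * (r^2 + (a - 1) * r + 1)"
    by (simp add: field_simps power2_eq_square)
  then have "t^2 + (a - 1) * t + 1 = 0 \<or> t = -1" using r t by auto
  moreover have "1 + a*t + a*t^2 + t^3 = (1 + t) * (t^2 + (a - 1) * t + 1)"
    by (simp add: algebra_simps power2_eq_square power3_eq_cube)
  ultimately show ?thesis by auto
qed

lemma col_comb_Btilde_support_power_sum_eq_zero:
  fixes a r t :: real
  assumes r: "r^2 + (a - 1) * r + 1 = 0" and t: "t \<in> {r, inverse r, -1}"
  shows "(\<Sum>i\<in>{i\<in>{1..n+3}. col_comb n (Btilde n a 1) c i \<noteq> 0}. col_comb n (Btilde n a 1) c i * t^i) = 0"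
proof -
  have "(\<Sum>i\<in>{i\<in>{1..n+3}. col_comb n (Btilde n a 1) c i \<noteq> 0}. col_comb n (Btilde n a 1) c i * t^i)
      = (\<Sum>i=1..n+3. col_comb n (Btilde n a 1) c i * t^i)"
    by (intro sum.mono_neutral_left) auto
  also have "\<dots> = 0"
    unfolding col_comb_Btilde_generating_function palindromic_cubic_roots[OF r t] by simp
  finally show ?thesis .
qed

lemma quadratic_root_abs_gt_3:
  fixes a :: real
  assumes "5 < \<bar>a\<bar>"
  obtains r where "r^2 + (a - 1) * r + 1 = 0" "3 < \<bar>r\<bar>"
proof -
  define s where "s = 1 - a"
  define w where "w = sqrt (s^2 - 4)"
  define R where "R = (\<bar>s\<bar> + w) / 2"
  have s: "4 < \<bar>s\<bar>" using assms by (simp add: s_def)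
  have "4^2 < \<bar>s\<bar>^2" using s by (intro power_strict_mono) auto
  then have s2: "16 < s^2" by simp
  then have w2: "w^2 = s^2 - 4" by (simp add: w_def)
  have "2 < w" unfolding w_def using s2 by (intro real_less_rsqrt) simp
  then have R: "3 < R" using s by (simp add: R_def)
  have "R^2 - \<bar>s\<bar> * R + 1 = (w^2 - \<bar>s\<bar>^2 + 4) / 4"
    by (simp add: R_def field_simps power2_eq_square)
  then have R_root: "R^2 - \<bar>s\<bar> * R + 1 = 0" using w2 by simp
  have "s \<noteq> 0" using s by auto
  have "(sgn s * R)^2 + (a - 1) * (sgn s * R) + 1 = (sgn s * sgn s) * R^2 - (s * sgn s) * R + 1"
    by (simp add: s_def power2_eq_square algebra_simps)
  also have "\<dots> = 0" using \<open>s \<noteq> 0\<close> R_root by (simp flip: abs_sgn)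
  finally have "(sgn s * R)^2 + (a - 1) * (sgn s * R) + 1 = 0" .
  moreover have "3 < \<bar>sgn s * R\<bar>" using R \<open>s \<noteq> 0\<close> by (simp add: abs_mult)
  ultimately show ?thesis by (rule that)
qed

theorem corollary5p4:
  fixes n :: nat and a :: real
  assumes "\<bar>a\<bar> > 5"
  shows "cols_lin_indep (n + 3) n (Btilde n a 1)
    \<and> (\<forall>c. (\<exists>j\<in>{1..n}. c j \<noteq> 0) \<longrightarrow>
           card {i\<in>{1..n+3}. col_comb n (Btilde n a 1) c i \<noteq> 0} \<ge> 4)"
proof (intro conjI allI impI)
  show "cols_lin_indep (n + 3) n (Btilde n a 1)" by (rule cols_lin_indep_Btilde)
  obtain r where r: "r^2 + (a - 1) * r + 1 = 0" "3 < \<bar>r\<bar>"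
    using quadratic_root_abs_gt_3[OF assms] .
  fix c :: "nat \<Rightarrow> real"
  assume c_nonzero: "\<exists>j\<in>{1..n}. c j \<noteq> 0"
  define v where "v = col_comb n (Btilde n a 1) c"
  define S where "S = {i\<in>{1..n+3}. v i \<noteq> 0}"
  have "S \<noteq> {}"
    using col_comb_nonzero_if_cols_lin_indep[OF cols_lin_indep_Btilde c_nonzero]
    unfolding S_def v_def by blast
  have vanish: "\<forall>t\<in>{r, inverse r, -1}. (\<Sum>i\<in>S. v i * t^i) = 0"
    using col_comb_Btilde_support_power_sum_eq_zero[OF r(1)] unfolding S_def v_def by blast
  have "\<not> card S \<le> 3"
  proof
    assume "card S \<le> 3"
    moreover have "finite S" unfolding S_def by simp
    ultimately have "\<forall>i\<in>S. v i = 0" using sparse_power_sum_coeffs_zero r(2) vanish by blast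
    then show False using \<open>S \<noteq> {}\<close> unfolding S_def by blast
  qed
  then show "card {i\<in>{1..n+3}. col_comb n (Btilde n a 1) c i \<noteq> 0} \<ge> 4"
    unfolding S_def v_def by simp
qed

end
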